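(* Let $n\ge 2$ and let $S$ be an admissible peak set in $S^B_n$. Then \[ \min\{d_H(\sigma,\rho) : \sigma,\rho\in P^B(S;n),\ \sigma\neq\rho\} =\min\{d_\ell(\sigma,\rho) : \sigma,\rho\in P^B(S;n),\ \sigma\neq\rho\} =\min\{d_W(\sigma,\rho) : \sigma,\rho\in P^B(S;n),\ \sigma\neq\rho\}=1. \]
   Context: $S^B_n$ is the set of bijections $\sigma$ of $\{-n,\dots,-1,1,\dots,n\}$ with $\sigma(-i)=-\sigma(i)$ for all $i$, with multiplication given by composition; a signed permutation is written in one-line notation $\sigma(1)\cdots\sigma(n)$. A signed permutation $\sigma$ has a peak at index $i\in\{2,\dots,n-1\}$ if $\sigma(i-1)<\sigma(i)>\sigma(i+1)$ (usual order on integers). $Peak(\sigma)$ is the set of indices where $\sigma$ has a peak, and for $S\subseteq[n]$, $P^B(S;n)=\{\sigma\in S^B_n : Peak(\sigma)=S\}$. $S$ is an admissible peak set if $P^B(S;n)\neq\emptyset$ (equivalently, $S\subseteq\{2,\dots,n-1\}$ and $S$ contains no two consecutive integers). For $\sigma,\rho\in S^B_n$: $d_H(\sigma,\rho)=|\{i\in[n] : \sigma(i)\neq\rho(i)\}|$; $d_\ell(\sigma,\rho)=\max\{|\sigma(i)-\rho(i)| : i\in[n]\}$; $d_W(\sigma,\rho)=\ell_B(\rho^{-1}\sigma)$, where $\ell_B(\gamma)$ is the minimum number of factors in an expression of $\gamma$ as a product of the Coxeter generators $s_0^B,\dots,s_{n-1}^B$; here $s_0^B$ swaps $1$ and $-1$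 and fixes all other values, and for $1\le i<n$, $s_i^B$ swaps $i$ with $i+1$ and $-i$ with $-(i+1)$, fixing everything else. *)

theory Defs
  imports Main
begin

text \<open>Signed permutations of {-n..-1,1..n}, represented as functions int => int
  that are bijections of that set, odd (sigma(-i) = -sigma(i)), and the identity
  outside it (so that each signed permutation has a unique representative).\<close>

definition signedset :: "nat \<Rightarrow> int set" where
  "signedset n = {i. 1 \<le> \<bar>i\<bar> \<and> \<bar>i\<bar> \<le> int n}"

definition signed_perms :: "nat \<Rightarrow> (int \<Rightarrow> int) set" where
  "signed_perms n = {\<sigma>. bij_betw \<sigma> (signedset n) (signedset n)
      \<and> (\<forall>i. \<sigma> (-i) = - \<sigma> i)
      \<and> (\<forall>i. i \<notin> signedset n \<longrightarrow> \<sigma> i = i)}"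

definition peak_set :: "nat \<Rightarrow> (int \<Rightarrow> int) \<Rightarrow> int set" where
  "peak_set n \<sigma> = {i. 2 \<le> i \<and> i \<le> int n - 1 \<and> \<sigma> (i - 1) < \<sigma> i \<and> \<sigma> i > \<sigma> (i + 1)}"

definition PB :: "int set \<Rightarrow> nat \<Rightarrow> (int \<Rightarrow> int) set" where
  "PB S n = {\<sigma> \<in> signed_perms n. peak_set n \<sigma> = S}"

definition admissible_peak_set :: "int set \<Rightarrow> nat \<Rightarrow> bool" where
  "admissible_peak_set S n \<longleftrightarrow> PB S n \<noteq> {}"

definition d_H :: "nat \<Rightarrow> (int \<Rightarrow> int) \<Rightarrow> (int \<Rightarrow> int) \<Rightarrow> nat" where
  "d_H n \<sigma> \<rho> = card {i \<in> {1..int n}. \<sigma> i \<noteq> \<rho> i}"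

definition d_l :: "nat \<Rightarrow> (int \<Rightarrow> int) \<Rightarrow> (int \<Rightarrow> int) \<Rightarrow> int" where
  "d_l n \<sigma> \<rho> = Max ((\<lambda>i. \<bar>\<sigma> i - \<rho> i\<bar>) ` {1..int n})"

definition sB :: "nat \<Rightarrow> int \<Rightarrow> int" where
  "sB i = (if i = 0 then (\<lambda>x. if x = 1 then -1 else if x = -1 then 1 else x)
           else (\<lambda>x. if x = int i then int i + 1 else if x = int i + 1 then int i
                 else if x = - int i then -(int i + 1) else if x = -(int i + 1) then - int i
                 else x))"

definition lengthB :: "nat \<Rightarrow> (int \<Rightarrow> int) \<Rightarrow> nat" where
  "lengthB n \<gamma> = (LEAST k. \<exists>ws. length ws = k \<and> set ws \<subseteq> {0..<n}
                       \<and> \<gamma> = foldr (\<lambda>i f. sB i \<circ> f) ws id)"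

definition d_W :: "nat \<Rightarrow> (int \<Rightarrow> int) \<Rightarrow> (int \<Rightarrow> int) \<Rightarrow> nat" where
  "d_W n \<sigma> \<rho> = lengthB n (inv \<rho> \<circ> \<sigma>)"

end

theory Submission
  imports Defs "HOL-Combinatorics.Permutations"
begin

text \<open>The peak set of a signed permutation only depends on how adjacent entries of its one-line
  notation compare. Hence positions \<open>2..n\<close> of any \<open>\<sigma> \<in> P\<^sup>B(S;n)\<close> may be relabelled by any
  values order-isomorphic to the old ones (up to a global sign), and position 1 by any value lying
  on the correct side of all of them. With values \<open>\<plusminus>2..n\<close> and \<open>\<plusminus>1\<close> at position 1 this gives
  \<open>\<tau> \<in> P\<^sup>B(S;n)\<close> such that \<open>\<tau> s\<^sub>0\<close>, which only flips the sign of the entry \<open>\<plusminus>1\<close>, has the same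
  peak set; \<open>\<tau>\<close> and \<open>\<tau> s\<^sub>0\<close> differ in one position and by one generator, so \<open>d\<^sub>H = d\<^sub>W = 1\<close>.
  With values \<open>\<plusminus>1..n-1\<close> and \<open>\<mp>n\<close> at position 1, the values \<open>n-1\<close> and \<open>n\<close> carry opposite signs,
  so exchanging them (left multiplication by \<open>s\<^sub>n\<^sub>-\<^sub>1\<close>) keeps every comparison while moving
  each entry by at most one, so \<open>d\<^sub>\<ell> = 1\<close>.\<close>

lemma finite_signedset: "finite (signedset n)"
  by (rule finite_subset[of _ "{- int n..int n}"]) (auto simp: signedset_def)

lemma signed_perms_iff_permutes:
  "\<sigma> \<in> signed_perms n \<longleftrightarrow> \<sigma> permutes signedset n \<and> (\<forall>i. \<sigma> (-i) = - \<sigma> i)"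
  by (auto simp: signed_perms_def permutes_imp_bij permutes_not_in intro: bij_imp_permutes)

lemma signed_perm_permutes: "\<sigma> \<in> signed_perms n \<Longrightarrow> \<sigma> permutes signedset n"
  by (simp add: signed_perms_iff_permutes)

lemma signed_perm_odd: "\<sigma> \<in> signed_perms n \<Longrightarrow> \<sigma> (-i) = - \<sigma> i"
  by (simp add: signed_perms_iff_permutes)

lemma signed_perm_in_signedset: "\<sigma> \<in> signed_perms n \<Longrightarrow> i \<in> signedset n \<Longrightarrow> \<sigma> i \<in> signedset n"
  by (simp add: permutes_in_image signed_perm_permutes)

lemma finite_signed_perms: "finite (signed_perms n)"
  by (rule finite_subset[OF _ finite_permutations[OF finite_signedset]])
    (auto simp: signed_perms_iff_permutes)

lemma comp_in_signed_perms:
  "\<sigma> \<in> signed_perms n \<Longrightarrow> \<tau> \<in> signed_perms n \<Longrightarrow> \<sigma> \<circ> \<tau> \<in> signed_perms n"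
  by (simp add: signed_perms_iff_permutes permutes_compose)

lemma inv_in_signed_perms:
  assumes "\<sigma> \<in> signed_perms n"
  shows "inv \<sigma> \<in> signed_perms n"
proof -
  have perm: "\<sigma> permutes signedset n" and odd: "\<And>i. \<sigma> (-i) = - \<sigma> i"
    using assms by (simp_all add: signed_perms_iff_permutes)
  have "inv \<sigma> (-i) = - inv \<sigma> i" for i
    by (simp add: permutes_inv_eq[OF perm] odd permutes_inverses[OF perm])
  then show ?thesis by (simp add: signed_perms_iff_permutes permutes_inv[OF perm])
qed

lemma signed_perms_differ_at_positive:
  assumes "\<sigma> \<in> signed_perms n" "\<rho> \<in> signed_perms n" "\<sigma> \<noteq> \<rho>"
  obtains i where "i \<in> {1..int n}" "\<sigma> i \<noteq> \<rho> i"
proof -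
  obtain x where x: "\<sigma> x \<noteq> \<rho> x" using assms(3) by blast
  then have "x \<in> signedset n"
    using assms(1,2) by (metis signed_perm_permutes permutes_not_in)
  moreover have "\<sigma> (-x) \<noteq> \<rho> (-x)" using x assms(1,2) by (simp add: signed_perm_odd)
  ultimately show ?thesis
    using that[of x] that[of "-x"] x by (cases "x > 0") (auto simp: signedset_def)
qed

definition sB_word :: "nat list \<Rightarrow> int \<Rightarrow> int" where
  "sB_word ws = foldr (\<lambda>i f. sB i \<circ> f) ws id"

lemma sB_word_Nil [simp]: "sB_word [] = id"
  by (simp add: sB_word_def)

lemma sB_word_Cons [simp]: "sB_word (i # ws) = sB i \<circ> sB_word ws"
  by (simp add: sB_word_def)

lemma sB_word_append: "sB_word (xs @ ys) = sB_word xs \<circ> sB_word ys"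
  by (induction xs) auto

lemma lengthB_eq_Least_sB_word:
  "lengthB n \<gamma> = (LEAST k. \<exists>ws. length ws = k \<and> set ws \<subseteq> {0..<n} \<and> \<gamma> = sB_word ws)"
  unfolding lengthB_def sB_word_def ..

lemma sB_neq_id: "sB i \<noteq> id"
proof
  assume "sB i = id"
  then have "sB i (int i + 1) = int i + 1" by simp
  then show False by (simp add: sB_def split: if_splits)
qed

lemma sB_sB [simp]: "sB i (sB i x) = x"
  by (simp add: sB_def)

lemma sB_word_rev_comp: "sB_word (rev ws) \<circ> sB_word ws = id"
  by (induction ws) (simp_all add: sB_word_append fun_eq_iff)

lemma sB_in_signed_perms:
  assumes "i < n"
  shows "sB i \<in> signed_perms n"
proof -
  have "sB i \<circ> sB i = id" by (simp add: fun_eq_iff)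
  then have "bij (sB i)" using o_bij by blast
  moreover have "sB i x = x" if "x \<notin> signedset n" for x
    using that assms by (auto simp: sB_def signedset_def)
  ultimately have "sB i permutes signedset n" by (simp add: bij_iff permutes_def)
  then show ?thesis by (auto simp: signed_perms_iff_permutes sB_def)
qed

lemma sB_word_in_signed_perms: "set ws \<subseteq> {0..<n} \<Longrightarrow> sB_word ws \<in> signed_perms n"
proof (induction ws)
  case Nil
  show ?case by (simp add: signed_perms_def bij_betw_def)
next
  case (Cons i ws)
  then show ?case
    unfolding sB_word_Cons by (intro comp_in_signed_perms sB_in_signed_perms) auto
qed

lemma sB_word_rev_upt:
  assumes "1 \<le> k" "k \<le> m"
  shows "sB_word (rev [k..<m]) (int k) = int m"
  using assms(2)
proof (induction m rule: dec_induct)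
  case (step m)
  then show ?case using assms(1) by (simp add: sB_def)
qed simp

lemma sB_word_upt_neg:
  assumes "1 \<le> k"
  shows "sB_word [1..<k] (- int k) = -1"
  using assms
proof (induction k rule: dec_induct)
  case (step k)
  then show ?case by (simp add: sB_word_append sB_def)
qed simp

lemma sB_word_to_top:
  assumes "a \<in> signedset n"
  obtains ws where "set ws \<subseteq> {0..<n}" "sB_word ws a = int n"
proof (cases "a > 0")
  case True
  then show ?thesis
    using that[of "rev [nat a..<n]"] sB_word_rev_upt[of "nat a" n] assms
    by (auto simp: signedset_def)
next
  case False
  define k where "k = nat (- a)"
  have k: "a = - int k" "1 \<le> k" "1 \<le> n" "k \<le> n"
    using False assms by (auto simp: k_def signedset_def)
  have "sB_word (rev [1..<n] @ 0 # [1..<k]) a = sB_word (rev [1..<n]) (sB 0 (-1))"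
    using sB_word_upt_neg[OF k(2)] by (simp add: k(1) sB_word_append)
  also have "\<dots> = int n"
    using sB_word_rev_upt[of 1 n] k(3) by (simp add: sB_def)
  finally have "sB_word (rev [1..<n] @ 0 # [1..<k]) a = int n" .
  then show ?thesis using k(3,4) by (intro that) auto
qed

lemma signed_perm_fixing_top:
  assumes "\<sigma> \<in> signed_perms (Suc n)" "\<sigma> (int (Suc n)) = int (Suc n)"
  shows "\<sigma> \<in> signed_perms n"
proof -
  have "\<sigma> (- int (Suc n)) = - int (Suc n)"
    using signed_perm_odd[OF assms(1), of "int (Suc n)"] assms(2) by simp
  moreover have "x = int (Suc n) \<or> x = - int (Suc n)" if "x \<in> signedset (Suc n) - signedset n" for x
    using that by (auto simp: signedset_def)
  ultimately have "\<sigma> x = x" if "x \<in> signedset (Suc n) - signedset n" for x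
    using that assms(2) by blast
  then have "\<sigma> permutes signedset n"
    using signed_perm_permutes[OF assms(1)] by (rule permutes_superset[rotated])
  then show ?thesis using assms(1) by (simp add: signed_perms_iff_permutes)
qed

lemma signed_perm_eq_sB_word:
  assumes "\<gamma> \<in> signed_perms n"
  obtains ws where "set ws \<subseteq> {0..<n}" "\<gamma> = sB_word ws"
  using assms
proof (induction n arbitrary: \<gamma> thesis)
  case 0
  have "signedset 0 = {}" by (auto simp: signedset_def)
  then have "\<gamma> = id" using signed_perm_permutes[OF "0.prems"(2)] by simp
  then show ?case using "0.prems"(1)[of "[]"] by simp
next
  case (Suc n)
  have "\<gamma> (int (Suc n)) \<in> signedset (Suc n)"
    by (intro signed_perm_in_signedset[OF Suc.prems(2)]) (simp add: signedset_def)
  then obtain us where us: "set us \<subseteq> {0..<Suc n}" "sB_word us (\<gamma> (int (Suc n))) = int (Suc n)"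
    by (rule sB_word_to_top)
  have "sB_word us \<circ> \<gamma> \<in> signed_perms n"
  proof (rule signed_perm_fixing_top)
    show "sB_word us \<circ> \<gamma> \<in> signed_perms (Suc n)"
      using us(1) Suc.prems(2) by (intro comp_in_signed_perms sB_word_in_signed_perms)
  qed (use us(2) in simp)
  then obtain ws where ws: "set ws \<subseteq> {0..<n}" "sB_word us \<circ> \<gamma> = sB_word ws"
    using Suc.IH by blast
  have "\<gamma> = sB_word (rev us) \<circ> (sB_word us \<circ> \<gamma>)"
    by (simp add: o_assoc sB_word_rev_comp)
  also have "\<dots> = sB_word (rev us @ ws)" by (simp add: ws(2) sB_word_append)
  finally show ?case
    using us(1) ws(1) by (intro Suc.prems(1)[of "rev us @ ws"]) auto
qed

lemma lengthB_sB:
  assumes "i < n"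
  shows "lengthB n (sB i) = 1"
  unfolding lengthB_eq_Least_sB_word
proof (rule Least_equality)
  show "\<exists>ws. length ws = 1 \<and> set ws \<subseteq> {0..<n} \<and> sB i = sB_word ws"
    using assms by (intro exI[of _ "[i]"]) auto
next
  fix k assume "\<exists>ws. length ws = k \<and> set ws \<subseteq> {0..<n} \<and> sB i = sB_word ws"
  then show "1 \<le> k" using sB_neq_id[of i] by (metis One_nat_def Suc_leI length_0_conv neq0_conv sB_word_Nil)
qed

lemma d_W_ge_1:
  assumes "\<sigma> \<in> signed_perms n" "\<rho> \<in> signed_perms n" "\<sigma> \<noteq> \<rho>"
  shows "1 \<le> d_W n \<sigma> \<rho>"
proof -
  let ?P = "\<lambda>k. \<exists>ws. length ws = k \<and> set ws \<subseteq> {0..<n} \<and> inv \<rho> \<circ> \<sigma> = sB_word ws"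
  have "inv \<rho> \<circ> \<sigma> \<in> signed_perms n"
    using assms(1,2) by (intro comp_in_signed_perms inv_in_signed_perms)
  then obtain ws where "set ws \<subseteq> {0..<n}" "inv \<rho> \<circ> \<sigma> = sB_word ws"
    by (rule signed_perm_eq_sB_word)
  then have "?P (Least ?P)" by (intro LeastI[of ?P "length ws"]) auto
  moreover have "inv \<rho> \<circ> \<sigma> \<noteq> id"
  proof
    assume "inv \<rho> \<circ> \<sigma> = id"
    then have "\<rho> \<circ> inv \<rho> \<circ> \<sigma> = \<rho>" by (simp add: o_assoc[symmetric])
    then show False
      using assms(3) by (simp add: permutes_inv_o(1)[OF signed_perm_permutes[OF assms(2)]])
  qed
  ultimately have "Least ?P \<noteq> 0" by auto
  then show ?thesis by (simp add: d_W_def lengthB_eq_Least_sB_word)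
qed

lemma d_W_comp_sB:
  assumes "\<rho> \<in> signed_perms n" "i < n"
  shows "d_W n (\<rho> \<circ> sB i) \<rho> = 1"
proof -
  have "inv \<rho> \<circ> (\<rho> \<circ> sB i) = sB i"
    using permutes_inv_o(2)[OF signed_perm_permutes[OF assms(1)]] by (simp add: o_assoc)
  then show ?thesis by (simp add: d_W_def lengthB_sB[OF assms(2)])
qed

lemma d_H_ge_1:
  assumes "\<sigma> \<in> signed_perms n" "\<rho> \<in> signed_perms n" "\<sigma> \<noteq> \<rho>"
  shows "1 \<le> d_H n \<sigma> \<rho>"
proof -
  obtain i where "i \<in> {1..int n}" "\<sigma> i \<noteq> \<rho> i"
    using assms by (rule signed_perms_differ_at_positive)
  then have "{i \<in> {1..int n}. \<sigma> i \<noteq> \<rho> i} \<noteq> {}" by blast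
  moreover have "finite {i \<in> {1..int n}. \<sigma> i \<noteq> \<rho> i}" by (rule finite_subset[of _ "{1..int n}"]) auto
  ultimately have "0 < card {i \<in> {1..int n}. \<sigma> i \<noteq> \<rho> i}" using card_gt_0_iff by blast
  then show ?thesis by (simp add: d_H_def)
qed

lemma d_H_comp_sB0:
  assumes "\<rho> \<in> signed_perms n" "0 < n"
  shows "d_H n (\<rho> \<circ> sB 0) \<rho> = 1"
proof -
  have "\<rho> 1 \<in> signedset n"
    using assms(2) by (intro signed_perm_in_signedset[OF assms(1)]) (auto simp: signedset_def)
  then have "\<rho> (-1) \<noteq> \<rho> 1"
    using signed_perm_odd[OF assms(1), of 1] by (auto simp: signedset_def)
  moreover have "sB 0 i = (if i = 1 then -1 else i)" if "i \<in> {1..int n}" for i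
    using that by (auto simp: sB_def)
  ultimately have "{i \<in> {1..int n}. (\<rho> \<circ> sB 0) i \<noteq> \<rho> i} = {1}"
    using assms(2) by (auto split: if_split_asm)
  then show ?thesis by (simp add: d_H_def)
qed

lemma d_l_ge_1:
  assumes "\<sigma> \<in> signed_perms n" "\<rho> \<in> signed_perms n" "\<sigma> \<noteq> \<rho>"
  shows "1 \<le> d_l n \<sigma> \<rho>"
proof -
  obtain i where i: "i \<in> {1..int n}" "\<sigma> i \<noteq> \<rho> i"
    using assms by (rule signed_perms_differ_at_positive)
  then have "\<bar>\<sigma> i - \<rho> i\<bar> \<le> d_l n \<sigma> \<rho>" unfolding d_l_def by (intro Max_ge) auto
  then show ?thesis using i(2) by linarith
qed

lemma d_l_sB_comp:
  assumes "\<rho> \<in> signed_perms n" "0 < k" "k < n"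
  shows "d_l n (sB k \<circ> \<rho>) \<rho> = 1"
  unfolding d_l_def
proof (rule Max_eqI)
  fix y assume "y \<in> (\<lambda>i. \<bar>(sB k \<circ> \<rho>) i - \<rho> i\<bar>) ` {1..int n}"
  then show "y \<le> 1" using assms(2) by (auto simp: sB_def)
next
  have "int k \<in> signedset n" using assms(2,3) by (simp add: signedset_def)
  then obtain x where x: "x \<in> signedset n" "\<rho> x = int k"
    using permutes_image[OF signed_perm_permutes[OF assms(1)]] by (metis imageE)
  define i where "i = \<bar>x\<bar>"
  have "\<rho> i = int k \<or> \<rho> i = - int k"
    using x(2) signed_perm_odd[OF assms(1), of x] by (auto simp: i_def abs_if)
  then have "\<bar>(sB k \<circ> \<rho>) i - \<rho> i\<bar> = 1" using assms(2) by (auto simp: sB_def)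
  moreover have "i \<in> {1..int n}" using x(1) by (simp add: i_def signedset_def)
  ultimately show "1 \<in> (\<lambda>i. \<bar>(sB k \<circ> \<rho>) i - \<rho> i\<bar>) ` {1..int n}" by force
qed simp

lemma comp_sB_neq:
  assumes "\<rho> \<in> signed_perms n"
  shows "\<rho> \<circ> sB i \<noteq> \<rho>"
proof
  assume "\<rho> \<circ> sB i = \<rho>"
  then have "inv \<rho> \<circ> (\<rho> \<circ> sB i) = inv \<rho> \<circ> \<rho>" by simp
  then have "sB i = id"
    by (simp add: o_assoc permutes_inv_o(2)[OF signed_perm_permutes[OF assms]])
  then show False by (rule sB_neq_id[THEN notE])
qed

lemma sB_comp_neq:
  assumes "\<rho> \<in> signed_perms n"
  shows "sB i \<circ> \<rho> \<noteq> \<rho>"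
proof
  assume "sB i \<circ> \<rho> = \<rho>"
  then have "sB i \<circ> \<rho> \<circ> inv \<rho> = \<rho> \<circ> inv \<rho>" by simp
  then have "sB i = id"
    by (simp add: o_assoc[symmetric] permutes_inv_o(1)[OF signed_perm_permutes[OF assms]])
  then show False by (rule sB_neq_id[THEN notE])
qed

lemma Min_distances_eqI:
  fixes d :: "'a \<Rightarrow> 'a \<Rightarrow> 'b::linorder"
  assumes "finite P"
    and lower: "\<And>\<sigma> \<rho>. \<sigma> \<in> P \<Longrightarrow> \<rho> \<in> P \<Longrightarrow> \<sigma> \<noteq> \<rho> \<Longrightarrow> a \<le> d \<sigma> \<rho>"
    and witness: "\<sigma>\<^sub>0 \<in> P" "\<rho>\<^sub>0 \<in> P" "\<sigma>\<^sub>0 \<noteq> \<rho>\<^sub>0" "d \<sigma>\<^sub>0 \<rho>\<^sub>0 = a"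
  shows "Min {d \<sigma> \<rho> | \<sigma> \<rho>. \<sigma> \<in> P \<and> \<rho> \<in> P \<and> \<sigma> \<noteq> \<rho>} = a"
proof (rule Min_eqI)
  have "{d \<sigma> \<rho> | \<sigma> \<rho>. \<sigma> \<in> P \<and> \<rho> \<in> P \<and> \<sigma> \<noteq> \<rho>} \<subseteq> case_prod d ` (P \<times> P)" by auto
  then show "finite {d \<sigma> \<rho> | \<sigma> \<rho>. \<sigma> \<in> P \<and> \<rho> \<in> P \<and> \<sigma> \<noteq> \<rho>}"
    by (rule finite_subset) (simp add: assms(1))
qed (use lower witness in auto)

definition signed_perm_of :: "nat \<Rightarrow> (int \<Rightarrow> int) \<Rightarrow> int \<Rightarrow> int" where
  "signed_perm_of n v x =
    (if x \<in> {1..int n} then v x else if - x \<in> {1..int n} then - v (- x) else x)"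

lemma signed_perm_of_pos [simp]: "x \<in> {1..int n} \<Longrightarrow> signed_perm_of n v x = v x"
  by (simp add: signed_perm_of_def)

lemma signed_perm_of_in_signed_perms:
  assumes inj: "inj_on (\<lambda>i. \<bar>v i\<bar>) {1..int n}"
    and range: "\<And>i. i \<in> {1..int n} \<Longrightarrow> \<bar>v i\<bar> \<in> {1..int n}"
  shows "signed_perm_of n v \<in> signed_perms n"
proof -
  let ?\<sigma> = "signed_perm_of n v"
  have odd: "?\<sigma> (-x) = - ?\<sigma> x" for x
    by (auto simp: signed_perm_of_def)
  have abs_\<sigma>: "\<bar>?\<sigma> x\<bar> = \<bar>v \<bar>x\<bar>\<bar>" if "x \<in> signedset n" for x
    using that by (auto simp: signed_perm_of_def signedset_def)
  have abs_x: "\<bar>x\<bar> \<in> {1..int n}" if "x \<in> signedset n" for x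
    using that by (simp add: signedset_def)
  have into: "?\<sigma> x \<in> signedset n" if "x \<in> signedset n" for x
    using range[OF abs_x[OF that]] abs_\<sigma>[OF that] by (simp add: signedset_def)
  have "inj_on ?\<sigma> (signedset n)"
  proof (rule inj_onI)
    fix x y assume x: "x \<in> signedset n" and y: "y \<in> signedset n" and eq: "?\<sigma> x = ?\<sigma> y"
    then have "\<bar>x\<bar> = \<bar>y\<bar>"
      using abs_\<sigma>[OF x] abs_\<sigma>[OF y] inj_onD[OF inj _ abs_x[OF x] abs_x[OF y]] by simp
    moreover have "y \<noteq> - x"
    proof
      assume "y = - x"
      then have "?\<sigma> x = 0" using eq odd[of x] by simp
      then show False using into[OF x] by (simp add: signedset_def)
    qed
    ultimately show "x = y" by (auto simp: abs_eq_iff)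
  qed
  moreover have "?\<sigma> ` signedset n \<subseteq> signedset n" using into by blast
  ultimately have "bij_betw ?\<sigma> (signedset n) (signedset n)"
    using endo_inj_surj[OF finite_signedset] by (simp add: bij_betw_def)
  moreover have "?\<sigma> x = x" if "x \<notin> signedset n" for x
    using that by (auto simp: signed_perm_of_def signedset_def)
  ultimately show ?thesis using odd by (simp add: signed_perms_def)
qed

lemma peak_set_cong_ascents:
  assumes \<sigma>: "\<sigma> \<in> signed_perms n" and \<tau>: "\<tau> \<in> signed_perms n"
    and ascents: "\<And>i. i \<in> {1..<int n} \<Longrightarrow> \<sigma> i < \<sigma> (i + 1) \<longleftrightarrow> \<tau> i < \<tau> (i + 1)"
  shows "peak_set n \<sigma> = peak_set n \<tau>"
proof -
  have descent: "f (i + 1) < f i \<longleftrightarrow> \<not> f i < f (i + 1)" if "f \<in> signed_perms n" for f i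
  proof -
    have "f i \<noteq> f (i + 1)"
      using injD[OF permutes_inj[OF signed_perm_permutes[OF that]], of i "i + 1"] by auto
    then show ?thesis by auto
  qed
  have "i \<in> peak_set n \<sigma> \<longleftrightarrow> i \<in> peak_set n \<tau>" if "2 \<le> i" "i \<le> int n - 1" for i
  proof -
    have "\<sigma> (i - 1) < \<sigma> i \<longleftrightarrow> \<tau> (i - 1) < \<tau> i" using ascents[of "i - 1"] that by simp
    moreover have "\<sigma> (i + 1) < \<sigma> i \<longleftrightarrow> \<tau> (i + 1) < \<tau> i"
      using ascents[of i] that descent[OF \<sigma>, of i] descent[OF \<tau>, of i] by simp
    ultimately show ?thesis using that by (simp add: peak_set_def)
  qed
  then show ?thesis by (auto simp: peak_set_def)
qed

lemma peak_set_comp_strict_mono: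
  assumes "strict_mono_on (\<sigma> ` {1..int n}) f"
  shows "peak_set n (f \<circ> \<sigma>) = peak_set n \<sigma>"
proof -
  have less_iff: "f (\<sigma> i) < f (\<sigma> j) \<longleftrightarrow> \<sigma> i < \<sigma> j" if "i \<in> {1..int n}" "j \<in> {1..int n}" for i j
    using strict_mono_on_less[OF assms] that by blast
  have "i \<in> peak_set n (f \<circ> \<sigma>) \<longleftrightarrow> i \<in> peak_set n \<sigma>" for i
    using less_iff[of "i - 1" i] less_iff[of "i + 1" i] by (auto simp: peak_set_def)
  then show ?thesis by blast
qed

lemma strict_mono_on_sB:
  assumes "0 < k" "\<not> {int k, int k + 1} \<subseteq> X" "\<not> {- int k, - int k - 1} \<subseteq> X"
  shows "strict_mono_on X (sB k)"
  by (rule strict_mono_onI) (use assms in \<open>auto simp: sB_def\<close>)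

lemma peak_set_comp_sB0:
  assumes \<rho>: "\<rho> \<in> signed_perms n" and "0 < n" and unit: "\<bar>\<rho> 1\<bar> = 1"
  shows "peak_set n (\<rho> \<circ> sB 0) = peak_set n \<rho>"
proof (rule peak_set_cong_ascents)
  show "\<rho> \<circ> sB 0 \<in> signed_perms n"
    using assms by (intro comp_in_signed_perms sB_in_signed_perms)
next
  fix i assume i: "i \<in> {1..<int n}"
  show "(\<rho> \<circ> sB 0) i < (\<rho> \<circ> sB 0) (i + 1) \<longleftrightarrow> \<rho> i < \<rho> (i + 1)"
  proof (cases "i = 1")
    case True
    have "\<rho> 2 \<in> signedset n"
      using i True by (intro signed_perm_in_signedset[OF \<rho>]) (auto simp: signedset_def)
    moreover have "\<rho> 2 \<noteq> \<rho> 1" "\<rho> 2 \<noteq> \<rho> (-1)"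
      using injD[OF permutes_inj[OF signed_perm_permutes[OF \<rho>]], of 2] by fastforce+
    ultimately have "1 < \<bar>\<rho> 2\<bar>"
      using unit signed_perm_odd[OF \<rho>, of 1] by (auto simp: signedset_def abs_if split: if_splits)
    then show ?thesis
      using True unit signed_perm_odd[OF \<rho>, of 1] by (auto simp: sB_def abs_if split: if_splits)
  next
    case False
    then show ?thesis using i by (simp add: sB_def)
  qed
qed (rule \<rho>)

definition rank_in :: "'a set \<Rightarrow> ('a \<Rightarrow> 'b::linorder) \<Rightarrow> 'a \<Rightarrow> nat" where
  "rank_in A f x = card {y \<in> A. f y < f x}"

lemma rank_in_less_card: "finite A \<Longrightarrow> x \<in> A \<Longrightarrow> rank_in A f x < card A"
  unfolding rank_in_def by (rule psubset_card_mono) auto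

lemma rank_in_less_iff:
  assumes "finite A" "x \<in> A" "y \<in> A"
  shows "rank_in A f x < rank_in A f y \<longleftrightarrow> f x < f y"
proof
  assume "f x < f y"
  then show "rank_in A f x < rank_in A f y"
    unfolding rank_in_def using assms by (intro psubset_card_mono) auto
next
  assume less: "rank_in A f x < rank_in A f y"
  show "f x < f y"
  proof (rule ccontr)
    assume "\<not> f x < f y"
    then have "rank_in A f y \<le> rank_in A f x"
      unfolding rank_in_def using assms(1) by (intro card_mono) auto
    then show False using less by simp
  qed
qed

lemma strict_mono_on_comp_rank_in_less_iff:
  fixes g :: "nat \<Rightarrow> 'c::linorder"
  assumes "finite A" "strict_mono_on {..<card A} g" "x \<in> A" "y \<in> A"
  shows "g (rank_in A f x) < g (rank_in A f y) \<longleftrightarrow> f x < f y"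
proof -
  have "rank_in A f x \<in> {..<card A}" "rank_in A f y \<in> {..<card A}"
    using rank_in_less_card[OF assms(1)] assms(3,4) by auto
  then show ?thesis
    using strict_mono_on_less[OF assms(2)] rank_in_less_iff[OF assms(1,3,4)] by simp
qed

lemma inj_on_comp_rank_in:
  fixes g :: "nat \<Rightarrow> 'c::linorder"
  assumes "finite A" "inj_on f A" "strict_mono_on {..<card A} g"
  shows "inj_on (\<lambda>x. g (rank_in A f x)) A"
proof (rule inj_onI)
  fix x y assume xy: "x \<in> A" "y \<in> A" and eq: "g (rank_in A f x) = g (rank_in A f y)"
  then have "\<not> f x < f y" "\<not> f y < f x"
    using strict_mono_on_comp_rank_in_less_iff[OF assms(1,3)] by (metis less_irrefl)+
  then show "x = y" using inj_onD[OF assms(2) _ xy] by auto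
qed

lemma signed_perm_of_scaled_in_signed_perms:
  assumes "inj_on w {1..int n}" "w ` {1..int n} \<subseteq> V" "inj_on abs V" "abs ` V \<subseteq> {1..int n}"
    and "\<epsilon> = 1 \<or> \<epsilon> = -1"
  shows "signed_perm_of n (\<lambda>i. \<epsilon> * w i) \<in> signed_perms n"
proof (rule signed_perm_of_in_signed_perms)
  have abs_scaled: "\<bar>\<epsilon> * x\<bar> = \<bar>x\<bar>" for x using assms(5) by auto
  have "inj_on (abs \<circ> w) {1..int n}"
    using comp_inj_on[OF assms(1) inj_on_subset[OF assms(3,2)]] .
  then show "inj_on (\<lambda>i. \<bar>\<epsilon> * w i\<bar>) {1..int n}" by (simp add: comp_def abs_scaled)
  show "\<bar>\<epsilon> * w i\<bar> \<in> {1..int n}" if "i \<in> {1..int n}" for i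
  proof -
    have "w i \<in> V" using that assms(2) by blast
    then show ?thesis using assms(4) by (auto simp: abs_scaled)
  qed
qed

lemma peak_set_eq_if_order_preserved:
  assumes "\<tau> \<in> signed_perms n" "\<sigma> \<in> signed_perms n"
    and first: "\<tau> 1 < \<tau> 2 \<longleftrightarrow> \<sigma> 1 < \<sigma> 2"
    and rest: "\<And>i j. i \<in> {2..int n} \<Longrightarrow> j \<in> {2..int n} \<Longrightarrow> \<tau> i < \<tau> j \<longleftrightarrow> \<sigma> i < \<sigma> j"
  shows "peak_set n \<tau> = peak_set n \<sigma>"
proof (rule peak_set_cong_ascents[OF assms(1,2)])
  fix i assume "i \<in> {1..<int n}"
  then show "\<tau> i < \<tau> (i + 1) \<longleftrightarrow> \<sigma> i < \<sigma> (i + 1)"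
    using first rest[of i "i + 1"] by (cases "i = 1") auto
qed

text \<open>The sign \<open>\<epsilon>\<close> orients the new values so that the comparison of positions 1 and 2 is kept
  although \<open>c\<close> lies below all of them.\<close>
lemma peak_set_relabel:
  fixes g :: "nat \<Rightarrow> int" and c :: int
  assumes \<sigma>: "\<sigma> \<in> signed_perms n" and n: "2 \<le> n"
    and g_mono: "strict_mono_on {..<n - 1} g" and c_less: "c < g 0"
    and abs_inj: "inj_on abs (insert c (g ` {..<n - 1}))"
    and abs_range: "abs ` insert c (g ` {..<n - 1}) \<subseteq> {1..int n}"
  obtains \<epsilon> \<tau> where "\<epsilon> = 1 \<or> \<epsilon> = -1" "\<tau> \<in> signed_perms n" "peak_set n \<tau> = peak_set n \<sigma>"
    "\<tau> 1 = \<epsilon> * c" "\<And>i. i \<in> {2..int n} \<Longrightarrow> \<tau> i \<in> (\<lambda>k. \<epsilon> * g k) ` {..<n - 1}"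
proof -
  define \<epsilon> :: int where "\<epsilon> = (if \<sigma> 1 < \<sigma> 2 then 1 else -1)"
  define A where "A = {2..int n}"
  define w where "w i = (if i = 1 then c else g (rank_in A (\<lambda>j. \<epsilon> * \<sigma> j) i))" for i
  define \<tau> where "\<tau> = signed_perm_of n (\<lambda>i. \<epsilon> * w i)"
  have \<epsilon>: "\<epsilon> = 1 \<or> \<epsilon> = -1" by (simp add: \<epsilon>_def)
  have A: "finite A" "card A = n - 1" "1 \<notin> A" "{1..int n} = insert 1 A" using n by (auto simp: A_def)
  have g_mono': "strict_mono_on {..<card A} g" using g_mono A(2) by simp
  have w_1: "w 1 = c" by (simp add: w_def)
  have w_A: "w i \<in> g ` {..<n - 1}" "c < w i" if "i \<in> A" for i
  proof -
    have "rank_in A (\<lambda>j. \<epsilon> * \<sigma> j) i < n - 1" using rank_in_less_card[OF A(1) that] A(2) by simp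
    moreover have "c < g k" if "k < n - 1" for k
      using c_less strict_mono_onD[OF g_mono, of 0 k] that n by (cases "k = 0") auto
    ultimately show "w i \<in> g ` {..<n - 1}" "c < w i" using that A(3) by (auto simp: w_def)
  qed
  have order: "\<tau> i < \<tau> j \<longleftrightarrow> \<sigma> i < \<sigma> j" if "i \<in> A" "j \<in> A" for i j
    using strict_mono_on_comp_rank_in_less_iff[OF A(1) g_mono', of _ _ "\<lambda>j. \<epsilon> * \<sigma> j"] that A \<epsilon>
    by (auto simp: \<tau>_def w_def A_def)
  have "inj_on (\<lambda>j. \<epsilon> * \<sigma> j) A"
    using permutes_inj_on[OF signed_perm_permutes[OF \<sigma>]] \<epsilon> by (auto simp: inj_on_def)
  then have "inj_on (\<lambda>i. g (rank_in A (\<lambda>j. \<epsilon> * \<sigma> j) i)) A"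
    by (rule inj_on_comp_rank_in[OF A(1) _ g_mono'])
  then have "inj_on w A" using A(3) by (auto simp: inj_on_def w_def)
  moreover have "w 1 \<notin> w ` A" using w_A(2) by (metis imageE less_irrefl w_1)
  ultimately have "inj_on w {1..int n}" using A(3) by (simp add: A(4))
  moreover have "w ` {1..int n} \<subseteq> insert c (g ` {..<n - 1})" using w_A(1) by (auto simp: A(4) w_1)
  ultimately have \<tau>_sp: "\<tau> \<in> signed_perms n"
    unfolding \<tau>_def using abs_inj abs_range \<epsilon> by (rule signed_perm_of_scaled_in_signed_perms)
  have "c < w 2" using w_A(2) n by (simp add: A_def)
  then have "\<tau> 1 < \<tau> 2 \<longleftrightarrow> \<sigma> 1 < \<sigma> 2" using n \<epsilon> by (auto simp: \<tau>_def w_def \<epsilon>_def)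
  then have "peak_set n \<tau> = peak_set n \<sigma>"
    using order by (intro peak_set_eq_if_order_preserved[OF \<tau>_sp \<sigma>]) (auto simp: A_def)
  moreover have "\<tau> 1 = \<epsilon> * c" using n by (simp add: \<tau>_def w_1)
  moreover have "\<tau> i \<in> (\<lambda>k. \<epsilon> * g k) ` {..<n - 1}" if "i \<in> {2..int n}" for i
    using that w_A(1)[of i] by (auto simp: \<tau>_def A_def)
  ultimately show ?thesis using that \<epsilon> \<tau>_sp by blast
qed

lemma PB_obtain_comp_sB0:
  assumes "2 \<le> n" "admissible_peak_set S n"
  obtains \<tau> where "\<tau> \<in> PB S n" "\<tau> \<circ> sB 0 \<in> PB S n"
proof -
  obtain \<sigma> where \<sigma>: "\<sigma> \<in> signed_perms n" "peak_set n \<sigma> = S"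
    using assms(2) by (auto simp: admissible_peak_set_def PB_def)
  obtain \<epsilon> \<tau> where \<tau>: "\<epsilon> = 1 \<or> \<epsilon> = -1" "\<tau> \<in> signed_perms n" "peak_set n \<tau> = S" "\<tau> 1 = \<epsilon>"
  proof (rule peak_set_relabel[OF \<sigma>(1) assms(1), of "\<lambda>k. int k + 2" 1])
    show "strict_mono_on {..<n - 1} (\<lambda>k. int k + 2)" by (rule strict_mono_onI) simp
    show "inj_on abs (insert 1 ((\<lambda>k. int k + 2) ` {..<n - 1}))" by (auto simp: inj_on_def)
    show "abs ` insert 1 ((\<lambda>k. int k + 2) ` {..<n - 1}) \<subseteq> {1..int n}"
      using assms(1) by auto
  qed (use \<sigma>(2) in auto)
  moreover have "\<tau> \<circ> sB 0 \<in> signed_perms n"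
    using \<tau>(2) assms(1) by (intro comp_in_signed_perms sB_in_signed_perms) auto
  moreover have "peak_set n (\<tau> \<circ> sB 0) = S"
    using peak_set_comp_sB0[OF \<tau>(2)] \<tau> assms(1) by auto
  ultimately show ?thesis using that by (simp add: PB_def)
qed

text \<open>The relabelled \<open>\<tau>\<close> has \<open>\<tau> 1 = \<mp>n\<close> and all other entries of the opposite sign, so it
  never contains both \<open>n - 1\<close> and \<open>n\<close>, nor both \<open>1 - n\<close> and \<open>-n\<close>.\<close>
lemma PB_obtain_sB_comp_top:
  assumes "2 \<le> n" "admissible_peak_set S n"
  obtains \<tau> where "\<tau> \<in> PB S n" "sB (n - 1) \<circ> \<tau> \<in> PB S n"
proof -
  obtain \<sigma> where \<sigma>: "\<sigma> \<in> signed_perms n" "peak_set n \<sigma> = S"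
    using assms(2) by (auto simp: admissible_peak_set_def PB_def)
  obtain \<epsilon> \<tau> where \<tau>: "\<epsilon> = 1 \<or> \<epsilon> = -1" "\<tau> \<in> signed_perms n" "peak_set n \<tau> = S"
      "\<tau> 1 = - \<epsilon> * int n" "\<And>i. i \<in> {2..int n} \<Longrightarrow> \<tau> i \<in> (\<lambda>k. \<epsilon> * (int k + 1)) ` {..<n - 1}"
  proof (rule peak_set_relabel[OF \<sigma>(1) assms(1), of "\<lambda>k. int k + 1" "- int n"])
    show "strict_mono_on {..<n - 1} (\<lambda>k. int k + 1)" by (rule strict_mono_onI) simp
    show "inj_on abs (insert (- int n) ((\<lambda>k. int k + 1) ` {..<n - 1}))" by (auto simp: inj_on_def)
    show "abs ` insert (- int n) ((\<lambda>k. int k + 1) ` {..<n - 1}) \<subseteq> {1..int n}"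
      using assms(1) by auto
  qed (use \<sigma>(2) in auto)
  have \<tau>_values: "x = - \<epsilon> * int n \<or> \<epsilon> * x \<in> {1..int n - 1}"
    if x: "x \<in> \<tau> ` {1..int n}" for x
  proof -
    obtain i where i: "i \<in> {1..int n}" "x = \<tau> i" using x by blast
    show ?thesis
    proof (cases "i = 1")
      case False
      then obtain k where "k < n - 1" "x = \<epsilon> * (int k + 1)" using i \<tau>(5)[of i] by auto
      then show ?thesis using \<tau>(1) by auto
    qed (use i \<tau>(4) in simp)
  qed
  have "strict_mono_on (\<tau> ` {1..int n}) (sB (n - 1))"
  proof (rule strict_mono_on_sB)
    show "\<not> {int (n - 1), int (n - 1) + 1} \<subseteq> \<tau> ` {1..int n}"
      using \<tau>_values[of "int n"] \<tau>_values[of "int n - 1"] \<tau>(1) assms(1) by (auto simp: of_nat_diff)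
    show "\<not> {- int (n - 1), - int (n - 1) - 1} \<subseteq> \<tau> ` {1..int n}"
      using \<tau>_values[of "- int n"] \<tau>_values[of "1 - int n"] \<tau>(1) assms(1) by (auto simp: of_nat_diff)
  qed (use assms(1) in simp)
  then have "peak_set n (sB (n - 1) \<circ> \<tau>) = S"
    using peak_set_comp_strict_mono \<tau>(3) by simp
  moreover have "sB (n - 1) \<circ> \<tau> \<in> signed_perms n"
    using \<tau>(2) assms(1) by (intro comp_in_signed_perms sB_in_signed_perms) auto
  ultimately show ?thesis using that \<tau>(2,3) by (simp add: PB_def)
qed

theorem theorem4p6:
  fixes n :: nat and S :: "int set"
  assumes "n \<ge> 2" and "admissible_peak_set S n"
  shows "Min {d_H n \<sigma> \<rho> | \<sigma> \<rho>. \<sigma> \<in> PB S n \<and> \<rho> \<in> PB S n \<and> \<sigma> \<noteq> \<rho>} = 1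
       \<and> Min {d_l n \<sigma> \<rho> | \<sigma> \<rho>. \<sigma> \<in> PB S n \<and> \<rho> \<in> PB S n \<and> \<sigma> \<noteq> \<rho>} = 1
       \<and> Min {d_W n \<sigma> \<rho> | \<sigma> \<rho>. \<sigma> \<in> PB S n \<and> \<rho> \<in> PB S n \<and> \<sigma> \<noteq> \<rho>} = 1"
proof -
  have finite_PB: "finite (PB S n)"
    by (rule finite_subset[OF _ finite_signed_perms]) (auto simp: PB_def)
  have PB_signed: "\<sigma> \<in> signed_perms n" if "\<sigma> \<in> PB S n" for \<sigma>
    using that by (simp add: PB_def)
  obtain \<tau> where \<tau>: "\<tau> \<in> PB S n" "\<tau> \<circ> sB 0 \<in> PB S n"
    using PB_obtain_comp_sB0[OF assms] .
  obtain \<upsilon> where \<upsilon>: "\<upsilon> \<in> PB S n" "sB (n - 1) \<circ> \<upsilon> \<in> PB S n"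
    using PB_obtain_sB_comp_top[OF assms] .
  have "Min {d_H n \<sigma> \<rho> | \<sigma> \<rho>. \<sigma> \<in> PB S n \<and> \<rho> \<in> PB S n \<and> \<sigma> \<noteq> \<rho>} = 1"
    using PB_signed \<tau> assms(1)
    by (intro Min_distances_eqI[OF finite_PB _ \<tau>(2,1)] d_H_ge_1 comp_sB_neq d_H_comp_sB0) auto
  moreover have "Min {d_l n \<sigma> \<rho> | \<sigma> \<rho>. \<sigma> \<in> PB S n \<and> \<rho> \<in> PB S n \<and> \<sigma> \<noteq> \<rho>} = 1"
    using PB_signed \<upsilon> assms(1)
    by (intro Min_distances_eqI[OF finite_PB _ \<upsilon>(2,1)] d_l_ge_1 sB_comp_neq d_l_sB_comp) auto
  moreover have "Min {d_W n \<sigma> \<rho> | \<sigma> \<rho>. \<sigma> \<in> PB S n \<and> \<rho> \<in> PB S n \<and> \<sigma> \<noteq> \<rho>} = 1"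
    using PB_signed \<tau> assms(1)
    by (intro Min_distances_eqI[OF finite_PB _ \<tau>(2,1)] d_W_ge_1 comp_sB_neq d_W_comp_sB) auto
  ultimately show ?thesis by blast
qed

end
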